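(* Let $\mathcal{A}$ be an order--invariant oblivious streaming algorithm that, for any $\epsilon\in(0,1)$ and $\delta\in(0,1)$, uses $M(\epsilon,\delta)$ space and, on any fixed stream of at most $m$ updates, outputs a correct solution to the $(f,\epsilon)$--estimation problem with probability at least $1-\delta$, where $f$ has range contained in $\{0\}\cup[1,\alpha]$ for an integer $\alpha\ge2$. Then for any $\epsilon\in(0,1)$, any $\delta\in(0,1/10)$ and any $k\ge0$, there is a robust streaming algorithm for the $(f,\epsilon)$--estimation problem in the Bounded--Memory Adversary Model with $k$ bits of persistent memory that succeeds with probability at least $1-\delta$ and uses $M(\epsilon/3,1/10)\cdot O\!\left(2^k\cdot\frac{\log\alpha}{\epsilon}\cdot\log m+\log(1/\delta)\right)$ space.
   Context: Fix $n,m$ and $f:\mathbb{Z}^n\to\{0\}\cup[1,\alpha]$. For $x,y\ge0$, $y$ is a $(1+\epsilon)$--multiplicative approximation to $x$ if $x\le y<(1+\epsilon)x$; the $(f,\epsilon)$--estimation problem on $v\in\mathbb{Z}^n$ asks for such an approximation to $f(v)$. A stream of updates is a sequence $(i_j,\Delta_j)\in[n]\times\{-1,1\}$, accumulating into frequency vectors $v^{(j)}$ with $v^{(j)}_i=\sum_{j'\le j,\,i_{j'}=i}\Delta_{j'}$. An oblivious streaming algorithm is given $\epsilon$ and an upper bound $m$ on the stream length, processes $t\le m$ updates, and then outputs a solution to the $(f,\epsilon)$--estimation problem on $v^{(t)}$. Such an algorithm with random seed $\rho$ is order--invariant if for any two streams $S_1,S_2$ of length at most $m$ accumulating to the same frequency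 vector, and any seed $\rho$, its memory state after processing $S_1$ equals that after processing $S_2$. Bounded--Memory Adversary Model: a game of $m$ rounds between an Adversary and an Algorithm. The Adversary has a persistent memory of at most $k$ bits (read/write, retained across rounds), a read-only estimate memory containing the most recent estimate $y_{j-1}$ (empty in round 1), an unbounded working memory erased after each round, and fresh random bits each round that are discarded afterwards. In round $j$ the Adversary computes $(i_j,\Delta_j)$ as a function only of the fresh randomness, the persistent memory and the estimate memory (and may rewrite the persistent memory); the Algorithm receives the update and outputs $y_j$, which overwrites the estimate memory. The Algorithm succeeds if for every $j\in[m]$, $y_j$ is a $(1+\epsilon)$--multiplicative approximation to $f(v^{(j)})$. *)

theory Defs
  imports "HOL-Probability.Probability"
begin

text \<open>Streams: updates are pairs (i, Delta) with i < n and Delta in {-1,1}.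
  Frequency vectors in Z^n are represented as functions nat => int (zero outside [n]).\<close>

definition valid_update :: "nat \<Rightarrow> nat \<times> int \<Rightarrow> bool" where
  "valid_update n u \<longleftrightarrow> fst u < n \<and> (snd u = 1 \<or> snd u = -1)"

definition valid_stream :: "nat \<Rightarrow> nat \<Rightarrow> (nat \<times> int) list \<Rightarrow> bool" where
  "valid_stream n m s \<longleftrightarrow> length s \<le> m \<and> (\<forall>u\<in>set s. valid_update n u)"

definition freq :: "(nat \<times> int) list \<Rightarrow> nat \<Rightarrow> int" where
  "freq s i = sum_list (map snd (filter (\<lambda>u. fst u = i) s))"

definition mult_approx :: "real \<Rightarrow> real \<Rightarrow> real \<Rightarrow> bool" where
  "mult_approx eps x y \<longleftrightarrow> x \<le> y \<and> (y < (1 + eps) * x \<or> (x = 0 \<and> y = 0))"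

record 'r salg =
  seed :: "'r pmf"
  init :: "'r \<Rightarrow> bool list"
  step :: "'r \<Rightarrow> bool list \<Rightarrow> nat \<times> int \<Rightarrow> bool list"
  est  :: "'r \<Rightarrow> bool list \<Rightarrow> real"

definition run :: "'r salg \<Rightarrow> 'r \<Rightarrow> (nat \<times> int) list \<Rightarrow> bool list" where
  "run A r s = fold (\<lambda>u st. step A r st u) s (init A r)"

definition order_invariant :: "nat \<Rightarrow> nat \<Rightarrow> 'r salg \<Rightarrow> bool" where
  "order_invariant n m A \<longleftrightarrow>
     (\<forall>r s1 s2. valid_stream n m s1 \<longrightarrow> valid_stream n m s2 \<longrightarrow> freq s1 = freq s2
        \<longrightarrow> run A r s1 = run A r s2)"

definition uses_space :: "nat \<Rightarrow> nat \<Rightarrow> 'r salg \<Rightarrow> real \<Rightarrow> bool" where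
  "uses_space n m A S \<longleftrightarrow>
     (\<forall>r\<in>set_pmf (seed A). \<forall>s. valid_stream n m s \<longrightarrow> real (length (run A r s)) \<le> S)"

definition oblivious_correct ::
  "nat \<Rightarrow> nat \<Rightarrow> ((nat \<Rightarrow> int) \<Rightarrow> real) \<Rightarrow> real \<Rightarrow> real \<Rightarrow> 'r salg \<Rightarrow> bool" where
  "oblivious_correct n m f eps delta A \<longleftrightarrow>
     (\<forall>s. valid_stream n m s \<longrightarrow>
        measure_pmf.prob (seed A) {r. mult_approx eps (f (freq s)) (est A r (run A r s))} \<ge> 1 - delta)"

text \<open>In each round it maps
  (persistent memory, estimate memory) to a distribution (over its fresh randomness) of
  (new persistent memory, update).  The estimate memory is None in round 1.\<close>
type_synonym adversary = "bool list \<Rightarrow> real option \<Rightarrow> (bool list \<times> (nat \<times> int)) pmf"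

definition bounded_adversary :: "nat \<Rightarrow> nat \<Rightarrow> bool list \<Rightarrow> adversary \<Rightarrow> bool" where
  "bounded_adversary n k p0 adv \<longleftrightarrow> length p0 \<le> k \<and>
     (\<forall>p y. length p \<le> k \<longrightarrow>
        (\<forall>pu\<in>set_pmf (adv p y). length (fst pu) \<le> k \<and> valid_update n (snd pu)))"

text \<open>Remaining j rounds of the game, given the algorithm seed r and the current configuration
  (persistent memory, estimate memory, algorithm memory, frequency vector).\<close>
fun play :: "'r salg \<Rightarrow> adversary \<Rightarrow> ((nat \<Rightarrow> int) \<Rightarrow> real) \<Rightarrow> real \<Rightarrow> 'r \<Rightarrow> nat \<Rightarrow>
      bool list \<times> real option \<times> bool list \<times> (nat \<Rightarrow> int) \<Rightarrow> bool pmf" where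
  "play R adv f eps r 0 cfg = return_pmf True"
| "play R adv f eps r (Suc j) (p, y, st, v) =
     bind_pmf (adv p y) (\<lambda>(p', u).
       (let st' = step R r st u;
            v' = v(fst u := v (fst u) + snd u);
            y' = est R r st'
        in if mult_approx eps (f v') y' then play R adv f eps r j (p', Some y', st', v')
           else return_pmf False))"

definition game :: "'r salg \<Rightarrow> adversary \<Rightarrow> bool list \<Rightarrow> ((nat \<Rightarrow> int) \<Rightarrow> real) \<Rightarrow> real \<Rightarrow> nat \<Rightarrow> bool pmf" where
  "game R adv p0 f eps m =
     bind_pmf (seed R) (\<lambda>r. play R adv f eps r m (p0, None, init R r, (\<lambda>_. 0)))"

end

theory Submission
  imports Defs
begin

text \<open>
  The robust algorithm runs \<open>T\<close> independent copies of the order-invariant algorithm with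
  accuracy \<open>\<epsilon>/3\<close> and failure probability \<open>1/10\<close>, and outputs the median of their estimates
  rounded up to a power of \<open>1 + \<epsilon>/3\<close>. By order invariance the memory of every copy, and hence
  the output, is a function of the current frequency vector; so for a fixed vector the output
  is wrong only if half of the copies fail on it, which by a Chernoff bound has probability at
  most \<open>(3/5)^T\<close>.

  The adversary chooses each update with fresh coins from its \<open>k\<close>-bit memory and the last
  rounded output, i.e. from one of \<open>N = O(2^k log \<alpha> / \<epsilon>)\<close> configurations. Updates commute, so
  the frequency vector reached by moves from a multiset of configurations does not depend on
  their order, and it is independent of the algorithm's seed. Unfolding the game round by round
  and integrating over the seed first bounds the failure probability by the number \<open>m^N\<close> of
  multisets of fewer than \<open>m\<close> configurations times \<open>(3/5)^T\<close>, which is at most \<open>\<delta>\<close> for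
  \<open>T = O(2^k log \<alpha> log m / \<epsilon> + log (1/\<delta>))\<close>.
\<close>

section \<open>Discrete probability and a Chernoff bound\<close>

lemma measure_bind_pmf:
  "measure_pmf.prob (bind_pmf M N) X = (\<integral>x. measure_pmf.prob (N x) X \<partial>M)"
proof -
  have "emeasure (bind_pmf M N) X = (\<integral>\<^sup>+x. emeasure (N x) X \<partial>M)"
    by simp
  also have "\<dots> = (\<integral>\<^sup>+x. ennreal (measure_pmf.prob (N x) X) \<partial>M)"
    by (simp add: measure_pmf.emeasure_eq_measure)
  also have "\<dots> = ennreal (\<integral>x. measure_pmf.prob (N x) X \<partial>M)"
    by (rule nn_integral_eq_integral) (auto intro!: measure_pmf.integrable_const_bound[where B=1])
  finally show ?thesis
    by (simp add: measure_pmf.emeasure_eq_measure integral_nonneg_AE)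
qed

lemma integral_measure_pmf_swap:
  fixes A :: "'a pmf" and B :: "'b pmf"
  shows "(\<integral>x. measure_pmf.prob B {y. (x, y) \<in> X} \<partial>A) = (\<integral>y. measure_pmf.prob A {x. (x, y) \<in> X} \<partial>B)"
proof -
  have pair: "measure_pmf.prob (pair_pmf A B) X = (\<integral>x. measure_pmf.prob B {y. (x, y) \<in> X} \<partial>A)"
    for A :: "'c pmf" and B :: "'d pmf" and X
    by (simp add: pair_pmf_def map_pmf_def[symmetric] measure_bind_pmf vimage_def)
  have "measure_pmf.prob (pair_pmf A B) X = measure_pmf.prob (pair_pmf B A) ((\<lambda>(x, y). (y, x)) -` X)"
    by (subst pair_commute_pmf) simp
  then show ?thesis
    by (simp add: pair)
qed

lemma integrable_measure_pmf_prob [simp]: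
  "integrable (measure_pmf M) (\<lambda>x. measure_pmf.prob (N x) (X x))"
  by (rule measure_pmf.integrable_const_bound[where B=1]) auto

lemma integral_sum_prob_le:
  fixes P :: "'a pmf" and W :: "'m \<Rightarrow> 'b pmf"
  assumes "\<And>w. measure_pmf.prob P {x. w \<in> E x} \<le> \<beta>"
  shows "(\<integral>x. (\<Sum>M\<in>S. measure_pmf.prob (W M) (E x)) \<partial>P) \<le> real (card S) * \<beta>"
proof -
  have swap: "(\<integral>x. measure_pmf.prob (W M) (E x) \<partial>P) = (\<integral>w. measure_pmf.prob P {x. w \<in> E x} \<partial>W M)" for M
    using integral_measure_pmf_swap[where A=P and B="W M" and X="{(x, w). w \<in> E x}"] by simp
  have "(\<integral>x. (\<Sum>M\<in>S. measure_pmf.prob (W M) (E x)) \<partial>P)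
      = (\<Sum>M\<in>S. \<integral>w. measure_pmf.prob P {x. w \<in> E x} \<partial>W M)"
    by (subst Bochner_Integration.integral_sum) (simp_all add: swap)
  also have "\<dots> \<le> (\<Sum>M\<in>S. \<beta>)"
    using assms by (intro sum_mono measure_pmf.integral_le_const) simp_all
  finally show ?thesis
    by simp
qed

lemma prob_replicate_pmf_Suc:
  "measure_pmf.prob (replicate_pmf (Suc T) P) X
     = (\<integral>x. measure_pmf.prob (replicate_pmf T P) {xs. x # xs \<in> X} \<partial>P)"
proof -
  have "replicate_pmf (Suc T) P = bind_pmf P (\<lambda>x. map_pmf (Cons x) (replicate_pmf T P))"
    by (simp add: map_pmf_def)
  then show ?thesis
    by (simp add: measure_bind_pmf vimage_def)
qed

text \<open>Chernoff's method in inductive form: conditioning on the first trial lowers the threshold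
  \<open>t\<close> by one exactly when that trial fails, which costs a factor \<open>c\<close>.\<close>

lemma prob_replicate_pmf_count_ge:
  fixes c p :: real
  assumes c: "1 \<le> c" and p: "measure_pmf.prob P {x. b x} \<le> p"
  shows "measure_pmf.prob (replicate_pmf T P) {xs. t \<le> real (length (filter b xs))}
           \<le> (1 + (c - 1) * p) ^ T / c powr t"
proof (induction T arbitrary: t)
  case 0
  show ?case
  proof (cases "t \<le> 0")
    case True
    then have "c powr t \<le> 1"
      using c powr_mono[of t 0 c] by simp
    then show ?thesis
      using c by (simp add: field_simps indicator_def)
  next
    case False
    then show ?thesis by (simp add: indicator_def)
  qed
next
  case (Suc T)
  define q where "q = (1 + (c - 1) * p) ^ T / c powr t"
  define ind where "ind x = (if b x then 1 else 0 :: real)" for x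
  have "measure_pmf.prob (replicate_pmf (Suc T) P) {xs. t \<le> real (length (filter b xs))}
      = (\<integral>x. measure_pmf.prob (replicate_pmf T P) {xs. t - ind x \<le> real (length (filter b xs))} \<partial>P)"
    unfolding prob_replicate_pmf_Suc
    by (intro Bochner_Integration.integral_cong refl arg_cong[where f="measure_pmf.prob _"])
       (auto simp: ind_def)
  also have "\<dots> \<le> (\<integral>x. q * (1 + (c - 1) * indicator {x. b x} x) \<partial>P)"
  proof (rule integral_mono)
    fix x
    have "measure_pmf.prob (replicate_pmf T P) {xs. t - ind x \<le> real (length (filter b xs))}
        \<le> (1 + (c - 1) * p) ^ T / c powr (t - ind x)"
      by (rule Suc.IH)
    also have "\<dots> = q * (1 + (c - 1) * indicator {x. b x} x)"
      using c by (auto simp: q_def ind_def indicator_def powr_diff)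
    finally show "measure_pmf.prob (replicate_pmf T P) {xs. t - ind x \<le> real (length (filter b xs))}
        \<le> q * (1 + (c - 1) * indicator {x. b x} x)" .
  next
    show "integrable P
        (\<lambda>x. measure_pmf.prob (replicate_pmf T P) {xs. t - ind x \<le> real (length (filter b xs))})"
      by (rule measure_pmf.integrable_const_bound[where B=1]) auto
    show "integrable P (\<lambda>x. q * (1 + (c - 1) * indicator {x. b x} x))"
      using c by (intro measure_pmf.integrable_const_bound[where B="\<bar>q\<bar> * c"])
        (auto simp: indicator_def abs_mult mult_le_cancel_left1)
  qed
  also have "\<dots> = q * (1 + (c - 1) * measure_pmf.prob P {x. b x})"
    by (simp only: integral_mult_right_zero, subst Bochner_Integration.integral_add)
       (auto intro!: measure_pmf.integrable_const_bound[where B=1])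
  also have "\<dots> \<le> q * (1 + (c - 1) * p)"
  proof -
    have "0 \<le> p"
      using p measure_nonneg order_trans by blast
    then show ?thesis
      using c p unfolding q_def by (intro mult_left_mono add_left_mono) auto
  qed
  finally show ?case
    by (simp add: q_def field_simps)
qed

lemma prob_replicate_pmf_half_ge:
  assumes "measure_pmf.prob P {x. b x} \<le> 1/10"
  shows "measure_pmf.prob (replicate_pmf T P) {xs. real T \<le> 2 * real (length (filter b xs))}
           \<le> (3/5) ^ T"
proof -
  have "measure_pmf.prob (replicate_pmf T P) {xs. real T \<le> 2 * real (length (filter b xs))}
     = measure_pmf.prob (replicate_pmf T P) {xs. real T / 2 \<le> real (length (filter b xs))}"
    by (intro arg_cong[where f="measure_pmf.prob _"]) auto
  also have "\<dots> \<le> (1 + (9 - 1) * (1/10)) ^ T / 9 powr (real T / 2)"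
    by (rule prob_replicate_pmf_count_ge) (use assms in auto)
  also have "(9::real) powr (real T / 2) = 3 ^ T"
    using powr_powr[of 3 2 "real T / 2"] by (simp add: powr_realpow)
  finally show ?thesis
    by (simp add: power_divide[symmetric])
qed

section \<open>Medians and rounding to a geometric grid\<close>

lemma length_filter_mono:
  "(\<And>x. x \<in> set xs \<Longrightarrow> P x \<Longrightarrow> Q x) \<Longrightarrow> length (filter P xs) \<le> length (filter Q xs)"
  by (induction xs) auto

definition median :: "'a::linorder list \<Rightarrow> 'a" where
  "median xs = Min {z \<in> set xs. length xs < 2 * length (filter (\<lambda>x. x \<le> z) xs)}"

lemma median_majority:
  fixes xs :: "'a::linorder list"
  assumes majority: "length xs < 2 * length (filter P xs)"
    and convex: "\<And>a b z. P a \<Longrightarrow> P b \<Longrightarrow> a \<le> z \<Longrightarrow> z \<le> b \<Longrightarrow> P z"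
  shows "P (median xs)"
proof -
  define S where "S = {z \<in> set xs. length xs < 2 * length (filter (\<lambda>x. x \<le> z) xs)}"
  define Q where "Q = {x \<in> set xs. P x}"
  have "finite S" "finite Q"
    unfolding S_def Q_def by auto
  have "filter P xs \<noteq> []"
    using majority by auto
  then have "Q \<noteq> {}"
    by (auto simp: Q_def filter_empty_conv)
  define hi where "hi = Max Q"
  define lo where "lo = Min Q"
  have "hi \<in> Q" "lo \<in> Q"
    using \<open>Q \<noteq> {}\<close> \<open>finite Q\<close> unfolding hi_def lo_def by auto
  have "length (filter P xs) \<le> length (filter (\<lambda>x. x \<le> hi) xs)"
    by (rule length_filter_mono) (use \<open>finite Q\<close> in \<open>auto simp: hi_def Q_def\<close>)
  then have "hi \<in> S"
    using \<open>hi \<in> Q\<close> majority unfolding S_def Q_def by auto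
  then have "median xs \<in> S" "median xs \<le> hi"
    using \<open>finite S\<close> unfolding median_def S_def[symmetric] by (auto intro: Min_in)
  have lo_le: "lo \<le> x" if "x \<in> set xs" "P x" for x
    using \<open>finite Q\<close> that by (auto simp: lo_def Q_def)
  have "lo \<le> median xs"
  proof (rule ccontr)
    assume "\<not> lo \<le> median xs"
    then have "length (filter (\<lambda>x. x \<le> median xs) xs) \<le> length (filter (\<lambda>x. \<not> P x) xs)"
      using lo_le by (intro length_filter_mono) force
    moreover have "length (filter P xs) + length (filter (\<lambda>x. \<not> P x) xs) = length xs"
      by (rule sum_length_filter_compl)
    ultimately show False
      using \<open>median xs \<in> S\<close> majority unfolding S_def by auto
  qed
  then show ?thesis
    using convex \<open>hi \<in> Q\<close> \<open>lo \<in> Q\<close> \<open>median xs \<le> hi\<close> by (auto simp: Q_def)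
qed

lemma mult_approx_convex:
  "mult_approx e x a \<Longrightarrow> mult_approx e x b \<Longrightarrow> a \<le> z \<Longrightarrow> z \<le> b \<Longrightarrow> mult_approx e x z"
  unfolding mult_approx_def by auto

text \<open>Rounding lets the output take only the values in \<open>pow_grid g K\<close>, which bounds what the
  adversary can learn from it.\<close>

definition round_up_pow :: "real \<Rightarrow> nat \<Rightarrow> real \<Rightarrow> real" where
  "round_up_pow g K z = (if z \<le> 0 then 0 else (1 + g) ^ min K (LEAST i. z \<le> (1 + g) ^ i))"

definition pow_grid :: "real \<Rightarrow> nat \<Rightarrow> real set" where
  "pow_grid g K = insert 0 ((\<lambda>i. (1 + g) ^ i) ` {..K})"

lemma finite_pow_grid [simp]: "finite (pow_grid g K)"
  by (simp add: pow_grid_def)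

lemma card_pow_grid_le: "card (pow_grid g K) \<le> K + 2"
  using card_image_le[of "{..K}" "\<lambda>i. (1 + g) ^ i"] by (simp add: pow_grid_def card_insert_if)

lemma round_up_pow_mem: "round_up_pow g K z \<in> pow_grid g K"
  unfolding round_up_pow_def pow_grid_def by auto

lemma mult_approx_round_up_pow:
  fixes g e x z a :: real
  assumes g: "0 < g" "(1 + g)\<^sup>2 \<le> 1 + e"
    and x: "x = 0 \<or> (1 \<le> x \<and> x \<le> a)"
    and K: "(1 + g) * a \<le> (1 + g) ^ K"
    and z: "mult_approx g x z"
  shows "mult_approx e x (round_up_pow g K z)"
proof (cases "x = 0")
  case True
  then show ?thesis
    using z unfolding mult_approx_def round_up_pow_def by auto
next
  case False
  then have "1 \<le> x" "x \<le> a" "x \<le> z" "z < (1 + g) * x"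
    using x z unfolding mult_approx_def by auto
  moreover have "(1 + g) * x \<le> (1 + g) * a"
    using \<open>x \<le> a\<close> g by (intro mult_left_mono) auto
  ultimately have "z \<le> (1 + g) ^ K"
    using K by linarith
  define i where "i = (LEAST i. z \<le> (1 + g) ^ i)"
  have "z \<le> (1 + g) ^ i"
    unfolding i_def by (rule LeastI) fact
  have "i \<le> K"
    unfolding i_def by (rule Least_le) fact
  then have rounded: "round_up_pow g K z = (1 + g) ^ i"
    using \<open>1 \<le> x\<close> \<open>x \<le> z\<close> by (simp add: round_up_pow_def i_def)
  have "(1 + g) ^ i \<le> (1 + g) * z"
  proof (cases i)
    case 0
    then show ?thesis
      using mult_mono[of 1 "1 + g" 1 z] \<open>1 \<le> x\<close> \<open>x \<le> z\<close> g by simp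
  next
    case (Suc i')
    have "\<not> z \<le> (1 + g) ^ i'"
      using not_less_Least[of i' "\<lambda>i. z \<le> (1 + g) ^ i"] Suc by (simp add: i_def)
    then show ?thesis
      using Suc g by simp
  qed
  also have "\<dots> < (1 + g)\<^sup>2 * x"
    using \<open>z < (1 + g) * x\<close> g by (simp add: power2_eq_square)
  also have "\<dots> \<le> (1 + e) * x"
    using g \<open>1 \<le> x\<close> by (intro mult_right_mono) auto
  finally show ?thesis
    using rounded \<open>z \<le> (1 + g) ^ i\<close> \<open>x \<le> z\<close> unfolding mult_approx_def by simp
qed

lemma le_two_pow_ceiling_log: "0 < x \<Longrightarrow> x \<le> 2 ^ nat \<lceil>log 2 x\<rceil>"
proof -
  assume "0 < x"
  then have "x = 2 powr log 2 x"
    by simp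
  also have "\<dots> \<le> 2 powr nat \<lceil>log 2 x\<rceil>"
    by (intro powr_mono real_nat_ceiling_ge) auto
  finally show ?thesis
    by (simp add: powr_realpow)
qed

lemma two_le_pow_ceiling_inverse: "0 < g \<Longrightarrow> 2 \<le> (1 + g) ^ nat \<lceil>1 / g\<rceil>" for g :: real
proof -
  assume "0 < g"
  have "1 \<le> real (nat \<lceil>1 / g\<rceil>) * g"
    using mult_right_mono[OF real_nat_ceiling_ge[of "1 / g"], of g] \<open>0 < g\<close> by simp
  then have "2 \<le> 1 + real (nat \<lceil>1 / g\<rceil>) * g"
    by simp
  also have "\<dots> \<le> (1 + g) ^ nat \<lceil>1 / g\<rceil>"
    using \<open>0 < g\<close> by (intro Bernoulli_inequality) simp
  finally show ?thesis .
qed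

lemma round_up_exponent_exists:
  fixes g \<alpha> :: real
  assumes g: "0 < g" "g \<le> 1" and "2 \<le> \<alpha>"
  shows "\<exists>K. (1 + g) * \<alpha> \<le> (1 + g) ^ K \<and> real K + 3 \<le> 8 * (log 2 \<alpha> / g)"
proof -
  define q where "q = nat \<lceil>1 / g\<rceil>"
  define a where "a = nat \<lceil>log 2 \<alpha>\<rceil>"
  have "1 \<le> log 2 \<alpha>"
    using \<open>2 \<le> \<alpha>\<close> by simp
  have "\<alpha> \<le> 2 ^ a"
    using \<open>2 \<le> \<alpha>\<close> le_two_pow_ceiling_log by (simp add: a_def)
  also have "\<dots> \<le> ((1 + g) ^ q) ^ a"
    using two_le_pow_ceiling_inverse[OF g(1)] by (intro power_mono) (auto simp: q_def)
  finally have "(1 + g) * \<alpha> \<le> (1 + g) ^ (q * a + 1)"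
    using g by (simp add: power_mult)
  moreover have "real (q * a + 1) + 3 \<le> 8 * (log 2 \<alpha> / g)"
  proof -
    have "q \<le> 2 / g"
      using g of_int_ceiling_le_add_one[of "1 / g"] by (simp add: q_def field_simps)
    have "real a = \<lceil>log 2 \<alpha>\<rceil>"
      using \<open>1 \<le> log 2 \<alpha>\<close> by (simp add: a_def)
    then have "a \<le> 2 * log 2 \<alpha>"
      using \<open>1 \<le> log 2 \<alpha>\<close> of_int_ceiling_le_add_one[of "log 2 \<alpha>"] by linarith
    have "real q * real a \<le> (2 / g) * (2 * log 2 \<alpha>)"
      using \<open>q \<le> 2 / g\<close> \<open>a \<le> 2 * log 2 \<alpha>\<close> g by (intro mult_mono) auto
    moreover have "1 \<le> log 2 \<alpha> / g"
      using \<open>1 \<le> log 2 \<alpha>\<close> g by (simp add: field_simps)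
    ultimately show ?thesis
      by simp
  qed
  ultimately show ?thesis
    by blast
qed

section \<open>Storing several memory states in one\<close>

text \<open>Blocks are empty when \<open>Ms = 0\<close>, which keeps the space bound proportional to \<open>Ms\<close>.\<close>

definition pad_width :: "nat \<Rightarrow> nat" where
  "pad_width Ms = (if Ms = 0 then 0 else Suc Ms)"

definition pad_encode :: "nat \<Rightarrow> bool list \<Rightarrow> bool list" where
  "pad_encode Ms s = (if Ms = 0 then [] else replicate (Ms - length s) False @ True # s)"

definition pad_decode :: "nat \<Rightarrow> bool list \<Rightarrow> bool list" where
  "pad_decode Ms c = (if Ms = 0 then [] else tl (dropWhile Not c))"

lemma length_pad_encode: "length s \<le> Ms \<Longrightarrow> length (pad_encode Ms s) = pad_width Ms"
  unfolding pad_encode_def pad_width_def by auto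

lemma pad_decode_encode:
  assumes "length s \<le> Ms"
  shows "pad_decode Ms (pad_encode Ms s) = s"
proof -
  have "dropWhile Not (replicate k False @ True # s) = True # s" for k
    by (induction k) auto
  then show ?thesis
    using assms unfolding pad_encode_def pad_decode_def by auto
qed

definition pack :: "nat \<Rightarrow> bool list list \<Rightarrow> bool list" where
  "pack Ms sts = concat (map (pad_encode Ms) sts)"

definition unpack :: "nat \<Rightarrow> nat \<Rightarrow> bool list \<Rightarrow> bool list list" where
  "unpack Ms T st =
     map (\<lambda>i. pad_decode Ms (take (pad_width Ms) (drop (i * pad_width Ms) st))) [0..<T]"

lemma length_pack:
  "\<forall>s\<in>set sts. length s \<le> Ms \<Longrightarrow> length (pack Ms sts) = length sts * pad_width Ms"
  by (induction sts) (auto simp: pack_def length_pad_encode)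

lemma pack_Cons: "pack Ms (s # sts) = pad_encode Ms s @ pack Ms sts"
  by (simp add: pack_def)

lemma unpack_Suc_append:
  assumes "length c = pad_width Ms"
  shows "unpack Ms (Suc T) (c @ st) = pad_decode Ms c # unpack Ms T st"
proof -
  have "drop (Suc i * pad_width Ms) (c @ st) = drop (i * pad_width Ms) st" for i
    using assms by simp
  then show ?thesis
    using assms by (simp only: unpack_def map_upt_Suc) simp
qed

lemma unpack_pack:
  "\<forall>s\<in>set sts. length s \<le> Ms \<Longrightarrow> unpack Ms (length sts) (pack Ms sts) = sts"
proof (induction sts)
  case Nil
  then show ?case by (simp add: unpack_def)
next
  case (Cons s sts)
  then show ?case
    by (simp add: pack_Cons unpack_Suc_append length_pad_encode pad_decode_encode)
qed

section \<open>The median of independent copies\<close>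

definition median_of_copies :: "'r salg \<Rightarrow> nat \<Rightarrow> nat \<Rightarrow> real \<Rightarrow> nat \<Rightarrow> ('r list \<times> nat) salg" where
  "median_of_copies B Ms T g K =
    \<lparr> seed = map_pmf (\<lambda>\<rho>. (\<rho>, 0)) (replicate_pmf T (seed B)),
      init = (\<lambda>(\<rho>, _). pack Ms (map (init B) \<rho>)),
      step = (\<lambda>(\<rho>, _) st u. pack Ms (map2 (\<lambda>r s. step B r s u) \<rho> (unpack Ms (length \<rho>) st))),
      est = (\<lambda>(\<rho>, _) st. round_up_pow g K (median (map2 (est B) \<rho> (unpack Ms (length \<rho>) st)))) \<rparr>"

lemma run_snoc: "run A r (s @ [u]) = step A r (run A r s) u"
  unfolding run_def by simp

lemma valid_stream_snoc:
  "valid_stream n m (s @ [u]) \<longleftrightarrow> valid_stream n m s \<and> valid_update n u \<and> length s < m"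
  unfolding valid_stream_def by auto

lemma run_median_of_copies:
  assumes "uses_space n m B Ms" "set \<rho> \<subseteq> set_pmf (seed B)" "valid_stream n m s"
  shows "run (median_of_copies B Ms T g K) (\<rho>, x) s = pack Ms (map (\<lambda>r. run B r s) \<rho>)"
  using assms(3)
proof (induction s rule: rev_induct)
  case Nil
  show ?case
    by (simp add: run_def median_of_copies_def)
next
  case (snoc u s)
  then have "valid_stream n m s"
    by (simp add: valid_stream_snoc)
  then have "unpack Ms (length \<rho>) (pack Ms (map (\<lambda>r. run B r s) \<rho>)) = map (\<lambda>r. run B r s) \<rho>"
    using assms(1,2) unpack_pack[of "map (\<lambda>r. run B r s) \<rho>" Ms] unfolding uses_space_def by auto
  then show ?case
    using snoc.IH \<open>valid_stream n m s\<close> unfolding run_snoc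
    by (simp add: median_of_copies_def zip_map2 zip_same_conv_map o_def)
qed

lemma est_median_of_copies:
  assumes "uses_space n m B Ms" "set \<rho> \<subseteq> set_pmf (seed B)" "valid_stream n m s"
  shows "est (median_of_copies B Ms T g K) (\<rho>, x) (run (median_of_copies B Ms T g K) (\<rho>, x) s)
           = round_up_pow g K (median (map (\<lambda>r. est B r (run B r s)) \<rho>))"
proof -
  have "unpack Ms (length \<rho>) (pack Ms (map (\<lambda>r. run B r s) \<rho>)) = map (\<lambda>r. run B r s) \<rho>"
    using assms unpack_pack[of "map (\<lambda>r. run B r s) \<rho>" Ms] unfolding uses_space_def by auto
  then show ?thesis
    unfolding run_median_of_copies[OF assms]
    by (simp add: median_of_copies_def zip_map2 zip_same_conv_map o_def)
qed

lemma length_run_median_of_copies: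
  assumes "uses_space n m B Ms" "set \<rho> \<subseteq> set_pmf (seed B)" "valid_stream n m s"
  shows "length (run (median_of_copies B Ms T g K) (\<rho>, x) s) = length \<rho> * pad_width Ms"
proof -
  have "\<forall>st\<in>set (map (\<lambda>r. run B r s) \<rho>). length st \<le> Ms"
    using assms unfolding uses_space_def by auto
  then show ?thesis
    unfolding run_median_of_copies[OF assms] by (simp add: length_pack)
qed

lemma seed_median_of_copies:
  "seed (median_of_copies B Ms T g K) = map_pmf (\<lambda>\<rho>. (\<rho>, 0)) (replicate_pmf T (seed B))"
  by (simp add: median_of_copies_def)

lemma set_pmf_seed_median_of_copies:
  "set_pmf (seed (median_of_copies B Ms T g K)) = {(\<rho>, 0) | \<rho>. set \<rho> \<subseteq> set_pmf (seed B) \<and> length \<rho> = T}"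
  by (auto simp: seed_median_of_copies set_replicate_pmf)

lemma median_of_copies_uses_space:
  "uses_space n m B Ms \<Longrightarrow> uses_space n m (median_of_copies B Ms T g K) (real (T * pad_width Ms))"
  unfolding uses_space_def[of n m "median_of_copies B Ms T g K"] set_pmf_seed_median_of_copies
  by (auto simp: length_run_median_of_copies)

lemma est_median_of_copies_mem:
  assumes "uses_space n m B Ms" "r \<in> set_pmf (seed (median_of_copies B Ms T g K))" "valid_stream n m s"
  shows "est (median_of_copies B Ms T g K) r (run (median_of_copies B Ms T g K) r s) \<in> pow_grid g K"
proof -
  obtain \<rho> where "r = (\<rho>, 0)" "set \<rho> \<subseteq> set_pmf (seed B)"
    using assms(2) by (auto simp: set_pmf_seed_median_of_copies)
  then show ?thesis
    using est_median_of_copies[OF assms(1) _ assms(3)] round_up_pow_mem by simp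
qed

lemma freq_eq_0_if_valid_stream: "valid_stream n m s \<Longrightarrow> n \<le> i \<Longrightarrow> freq s i = 0"
  unfolding valid_stream_def valid_update_def freq_def by (induction s) auto

lemma est_median_of_copies_correct:
  assumes "uses_space n m B Ms" "set \<rho> \<subseteq> set_pmf (seed B)" "valid_stream n m s"
    and majority:
      "length \<rho> < 2 * length (filter (\<lambda>r. mult_approx g (f (freq s)) (est B r (run B r s))) \<rho>)"
    and g: "0 < g" "(1 + g)\<^sup>2 \<le> 1 + \<epsilon>"
    and range: "f (freq s) = 0 \<or> (1 \<le> f (freq s) \<and> f (freq s) \<le> a)"
    and K: "(1 + g) * a \<le> (1 + g) ^ K"
  shows "mult_approx \<epsilon> (f (freq s))
           (est (median_of_copies B Ms T g K) (\<rho>, x) (run (median_of_copies B Ms T g K) (\<rho>, x) s))"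
proof -
  have "mult_approx g (f (freq s)) (median (map (\<lambda>r. est B r (run B r s)) \<rho>))"
    by (rule median_majority[OF _ mult_approx_convex])
       (use majority in \<open>simp_all add: filter_map o_def\<close>)
  then show ?thesis
    unfolding est_median_of_copies[OF assms(1-3)] by (rule mult_approx_round_up_pow[OF g range K])
qed

text \<open>Whatever its history, the game can fail only when the frequency vector enters this set.\<close>

definition error_freqs ::
  "nat \<Rightarrow> nat \<Rightarrow> ((nat \<Rightarrow> int) \<Rightarrow> real) \<Rightarrow> real \<Rightarrow> 'r salg \<Rightarrow> 'r \<Rightarrow> (nat \<Rightarrow> int) set"
where
  "error_freqs n m f eps R r =
     {w. \<exists>s. valid_stream n m s \<and> freq s = w \<and> \<not> mult_approx eps (f w) (est R r (run R r s))}"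

text \<open>By order invariance every copy is in the state it reaches on \<open>s0\<close>, whichever stream
  reaching the same frequency vector was read.\<close>

lemma median_of_copies_error_imp_half_fail:
  assumes B: "order_invariant n m B" "uses_space n m B Ms"
    and range: "\<forall>v. (\<forall>i\<ge>n. v i = 0) \<longrightarrow> f v = 0 \<or> (1 \<le> f v \<and> f v \<le> a)"
    and g: "0 < g" "(1 + g)\<^sup>2 \<le> 1 + \<epsilon>"
    and K: "(1 + g) * a \<le> (1 + g) ^ K"
    and \<rho>: "set \<rho> \<subseteq> set_pmf (seed B)"
    and s0: "valid_stream n m s0" "freq s0 = w"
    and error: "w \<in> error_freqs n m f \<epsilon> (median_of_copies B Ms T g K) (\<rho>, x)"
  shows "length \<rho> \<le> 2 * length (filter (\<lambda>r. \<not> mult_approx g (f w) (est B r (run B r s0))) \<rho>)"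
proof (rule ccontr)
  define good where "good = (\<lambda>r. mult_approx g (f w) (est B r (run B r s0)))"
  assume "\<not> length \<rho> \<le> 2 * length (filter (\<lambda>r. \<not> good r) \<rho>)"
  moreover have "length (filter good \<rho>) + length (filter (\<lambda>r. \<not> good r) \<rho>) = length \<rho>"
    by (rule sum_length_filter_compl)
  ultimately have majority: "length \<rho> < 2 * length (filter good \<rho>)"
    by linarith
  obtain s where s: "valid_stream n m s" "freq s = w"
    and wrong: "\<not> mult_approx \<epsilon> (f w)
                  (est (median_of_copies B Ms T g K) (\<rho>, x) (run (median_of_copies B Ms T g K) (\<rho>, x) s))"
    using error by (auto simp: error_freqs_def)
  have "run B r s = run B r s0" for r
    using B(1) s s0 unfolding order_invariant_def by metis
  then have "filter good \<rho> = filter (\<lambda>r. mult_approx g (f (freq s)) (est B r (run B r s))) \<rho>"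
    using s(2) by (simp add: good_def)
  moreover have "f (freq s) = 0 \<or> (1 \<le> f (freq s) \<and> f (freq s) \<le> a)"
    using range freq_eq_0_if_valid_stream[OF s(1)] by blast
  ultimately have "mult_approx \<epsilon> (f (freq s))
                     (est (median_of_copies B Ms T g K) (\<rho>, x) (run (median_of_copies B Ms T g K) (\<rho>, x) s))"
    using majority by (intro est_median_of_copies_correct[OF B(2) \<rho> s(1) _ g _ K]) simp_all
  then show False
    using wrong s(2) by simp
qed

lemma median_of_copies_error_prob_le:
  fixes B :: "'r salg"
  assumes B: "order_invariant n m B" "uses_space n m B Ms" "oblivious_correct n m f g (1/10) B"
    and range: "\<forall>v. (\<forall>i\<ge>n. v i = 0) \<longrightarrow> f v = 0 \<or> (1 \<le> f v \<and> f v \<le> a)"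
    and g: "0 < g" "(1 + g)\<^sup>2 \<le> 1 + \<epsilon>"
    and K: "(1 + g) * a \<le> (1 + g) ^ K"
  shows "measure_pmf.prob (seed (median_of_copies B Ms T g K))
           {r. w \<in> error_freqs n m f \<epsilon> (median_of_copies B Ms T g K) r} \<le> (3/5) ^ T"
proof (cases "\<exists>s. valid_stream n m s \<and> freq s = w")
  case False
  then have no_error: "{r. w \<in> error_freqs n m f \<epsilon> (median_of_copies B Ms T g K) r} = {}"
    by (auto simp: error_freqs_def)
  show ?thesis
    unfolding no_error by simp
next
  case True
  then obtain s0 where s0: "valid_stream n m s0" "freq s0 = w"
    by blast
  define fail where "fail = (\<lambda>r. \<not> mult_approx g (f w) (est B r (run B r s0)))"
  have "{r. mult_approx g (f w) (est B r (run B r s0))} = UNIV - {r. fail r}"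
    by (auto simp: fail_def)
  then have "1 - 1/10 \<le> 1 - measure_pmf.prob (seed B) {r. fail r}"
    using B(3) s0 measure_pmf.prob_compl[of "{r. fail r}" "seed B"]
    unfolding oblivious_correct_def by auto
  then have "measure_pmf.prob (seed B) {r. fail r} \<le> 1/10"
    by simp
  have "measure_pmf.prob (seed (median_of_copies B Ms T g K))
          {r. w \<in> error_freqs n m f \<epsilon> (median_of_copies B Ms T g K) r}
      = measure_pmf.prob (replicate_pmf T (seed B))
          {\<rho>. w \<in> error_freqs n m f \<epsilon> (median_of_copies B Ms T g K) (\<rho>, 0)}"
    by (simp add: seed_median_of_copies vimage_def)
  also have "\<dots> \<le> measure_pmf.prob (replicate_pmf T (seed B))
                      {\<rho>. real T \<le> 2 * real (length (filter fail \<rho>))}"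
  proof (rule measure_pmf.finite_measure_mono_AE, rule AE_pmfI, rule impI)
    fix \<rho>
    assume "\<rho> \<in> set_pmf (replicate_pmf T (seed B))"
      and "\<rho> \<in> {\<rho>. w \<in> error_freqs n m f \<epsilon> (median_of_copies B Ms T g K) (\<rho>, 0)}"
    then have "set \<rho> \<subseteq> set_pmf (seed B)" "length \<rho> = T"
      and error: "w \<in> error_freqs n m f \<epsilon> (median_of_copies B Ms T g K) (\<rho>, 0)"
      by (auto simp: set_replicate_pmf)
    then have "T \<le> 2 * length (filter fail \<rho>)"
      using median_of_copies_error_imp_half_fail[OF B(1,2) range g K \<open>set \<rho> \<subseteq> _\<close> s0 error]
      by (simp add: fail_def)
    then show "\<rho> \<in> {\<rho>. real T \<le> 2 * real (length (filter fail \<rho>))}"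
      by simp
  qed simp
  also have "\<dots> \<le> (3/5) ^ T"
    by (rule prob_replicate_pmf_half_ge) fact
  finally show ?thesis .
qed

section \<open>A union bound over the configurations of the adversary\<close>

lemma
  assumes "finite A"
  shows finite_multisets_size_less: "finite {M. size M < j \<and> set_mset M \<subseteq> A}"
    and card_multisets_size_less: "card {M. size M < j \<and> set_mset M \<subseteq> A} \<le> j ^ card A"
proof -
  define counts where "counts M = restrict (count M) A" for M :: "'a multiset"
  have inj: "inj_on counts {M. size M < j \<and> set_mset M \<subseteq> A}"
  proof (rule inj_onI, rule multiset_eqI)
    fix M N x
    assume "M \<in> {M. size M < j \<and> set_mset M \<subseteq> A}" "N \<in> {M. size M < j \<and> set_mset M \<subseteq> A}"
      and "counts M = counts N"
    then show "count M x = count N x"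
    proof (cases "x \<in> A")
      case False
      then have "x \<notin># M" "x \<notin># N"
        using \<open>M \<in> _\<close> \<open>N \<in> _\<close> by auto
      then show ?thesis
        by (simp add: not_in_iff)
    qed (auto simp: counts_def dest: fun_cong[of _ _ x])
  qed
  have into: "counts ` {M. size M < j \<and> set_mset M \<subseteq> A} \<subseteq> A \<rightarrow>\<^sub>E {..<j}"
  proof
    fix g
    assume "g \<in> counts ` {M. size M < j \<and> set_mset M \<subseteq> A}"
    then obtain M where "size M < j" "g = counts M"
      by auto
    then show "g \<in> A \<rightarrow>\<^sub>E {..<j}"
      using count_le_size[of M] le_less_trans by (auto simp: counts_def)
  qed
  have "finite (A \<rightarrow>\<^sub>E {..<j})"
    using assms by (simp add: finite_PiE)
  then show "finite {M. size M < j \<and> set_mset M \<subseteq> A}"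
    by (rule inj_on_finite[OF inj into])
  have "card {M. size M < j \<and> set_mset M \<subseteq> A} \<le> card (A \<rightarrow>\<^sub>E {..<j})"
    using inj into \<open>finite (A \<rightarrow>\<^sub>E {..<j})\<close> by (rule card_inj_on_le)
  also have "\<dots> = j ^ card A"
    using assms by (simp add: card_PiE)
  finally show "card {M. size M < j \<and> set_mset M \<subseteq> A} \<le> j ^ card A" .
qed

definition add_update :: "(nat \<Rightarrow> int) \<Rightarrow> nat \<times> int \<Rightarrow> nat \<Rightarrow> int" where
  "add_update v u = v(fst u := v (fst u) + snd u)"

lemma add_update_commute: "add_update (add_update v u) u' = add_update (add_update v u') u"
  unfolding add_update_def by (auto simp: fun_eq_iff)

lemma freq_Nil: "freq [] = (\<lambda>_. 0)"
  unfolding freq_def by auto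

lemma freq_snoc: "freq (s @ [u]) = add_update (freq s) u"
  unfolding freq_def add_update_def by (auto simp: fun_eq_iff)

definition adversary_move ::
  "adversary \<Rightarrow> bool list \<times> real option \<Rightarrow> (nat \<Rightarrow> int) pmf \<Rightarrow> (nat \<Rightarrow> int) pmf" where
  "adversary_move adv c P =
     bind_pmf P (\<lambda>v. map_pmf (\<lambda>pu. add_update v (snd pu)) (adv (fst c) (snd c)))"

lemma comp_fun_commute_adversary_move: "comp_fun_commute (adversary_move adv)"
proof
  fix c d
  have "(adversary_move adv d \<circ> adversary_move adv c) P =
        bind_pmf P (\<lambda>v. bind_pmf (adv (fst c) (snd c)) (\<lambda>pu. bind_pmf (adv (fst d) (snd d))
          (\<lambda>qu. return_pmf (add_update (add_update v (snd pu)) (snd qu)))))" for P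
    by (simp add: adversary_move_def map_pmf_def bind_assoc_pmf bind_return_pmf)
  also have "\<dots> P = (adversary_move adv c \<circ> adversary_move adv d) P" for P
    by (subst bind_commute_pmf)
       (simp add: adversary_move_def map_pmf_def bind_assoc_pmf bind_return_pmf add_update_commute)
  finally show
    "adversary_move adv d \<circ> adversary_move adv c = adversary_move adv c \<circ> adversary_move adv d"
    by auto
qed

text \<open>The frequency vector reached from \<open>v\<close> by one independent adversary move from each
  configuration in \<open>M\<close>; since updates commute, the order of the moves is irrelevant.\<close>

definition walk :: "adversary \<Rightarrow> (bool list \<times> real option) multiset \<Rightarrow> (nat \<Rightarrow> int) \<Rightarrow> (nat \<Rightarrow> int) pmf" where
  "walk adv M v = fold_mset (adversary_move adv) (return_pmf v) M"

lemma walk_empty [simp]: "walk adv {#} v = return_pmf v"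
  unfolding walk_def by simp

lemma walk_add_mset_last: "walk adv (add_mset c M) v = adversary_move adv c (walk adv M v)"
  unfolding walk_def by (rule comp_fun_commute.fold_mset_add_mset[OF comp_fun_commute_adversary_move])

lemma walk_add_mset:
  "walk adv (add_mset c M) v = bind_pmf (adv (fst c) (snd c)) (\<lambda>pu. walk adv M (add_update v (snd pu)))"
proof (induction M)
  case empty
  show ?case
    by (simp add: walk_add_mset_last adversary_move_def map_pmf_def bind_return_pmf)
next
  case (add d M)
  have "walk adv (add_mset c (add_mset d M)) v = adversary_move adv d (walk adv (add_mset c M) v)"
    by (simp only: add_mset_commute[of c d] walk_add_mset_last)
  also have "\<dots> = bind_pmf (adv (fst c) (snd c))
                      (\<lambda>pu. adversary_move adv d (walk adv M (add_update v (snd pu))))"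
    by (simp add: add adversary_move_def bind_assoc_pmf)
  finally show ?case
    by (simp only: walk_add_mset_last)
qed

definition configs :: "nat \<Rightarrow> real set \<Rightarrow> (bool list \<times> real option) set" where
  "configs k G = {p. length p \<le> k} \<times> insert None (Some ` G)"

lemma finite_configs: "finite G \<Longrightarrow> finite (configs k G)"
  using finite_lists_length_le[of "UNIV :: bool set" k] by (simp add: configs_def)

lemma card_configs_le: "finite G \<Longrightarrow> card (configs k G) \<le> 2 ^ Suc k * (card G + 1)"
proof -
  assume "finite G"
  have "card {p :: bool list. length p \<le> k} = (\<Sum>i\<le>k. 2 ^ i)"
    using card_lists_length_le[of "UNIV :: bool set" k] by simp
  also have "\<dots> \<le> 2 ^ Suc k"
    by (induction k) auto
  finally have "card {p :: bool list. length p \<le> k} \<le> 2 ^ Suc k" .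
  moreover have "card (insert None (Some ` G)) \<le> card G + 1"
    using \<open>finite G\<close> by (simp add: card_insert_if card_image)
  ultimately show ?thesis
    unfolding configs_def card_cartesian_product by (rule mult_mono) auto
qed

lemma play_Suc_run:
  "play R adv f eps r (Suc j) (p, y, run R r s, freq s) =
     bind_pmf (adv p y) (\<lambda>(p', u).
       if mult_approx eps (f (freq (s @ [u]))) (est R r (run R r (s @ [u])))
       then play R adv f eps r j
              (p', Some (est R r (run R r (s @ [u]))), run R r (s @ [u]), freq (s @ [u]))
       else return_pmf False)"
  by (simp add: run_snoc freq_snoc add_update_def Let_def cong: if_cong)

lemma sum_prob_walk_add_mset_le:
  assumes "finite C" "c \<in> C"
  shows "(\<Sum>M | size M < j \<and> set_mset M \<subseteq> C. measure_pmf.prob (walk adv (add_mset c M) v) X)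
           \<le> (\<Sum>M | size M < Suc j \<and> set_mset M \<subseteq> C. measure_pmf.prob (walk adv M v) X)"
proof -
  have "(\<Sum>M | size M < j \<and> set_mset M \<subseteq> C. measure_pmf.prob (walk adv (add_mset c M) v) X)
      = (\<Sum>M \<in> add_mset c ` {M. size M < j \<and> set_mset M \<subseteq> C}. measure_pmf.prob (walk adv M v) X)"
    by (simp add: sum.reindex inj_on_def)
  also have "\<dots> \<le> (\<Sum>M | size M < Suc j \<and> set_mset M \<subseteq> C. measure_pmf.prob (walk adv M v) X)"
    using finite_multisets_size_less[OF assms(1)] assms(2) by (intro sum_mono2) auto
  finally show ?thesis .
qed

lemma one_le_sum_prob_walk:
  assumes "finite C" "v \<in> X"
  shows "1 \<le> (\<Sum>M | size M < Suc j \<and> set_mset M \<subseteq> C. measure_pmf.prob (walk adv M v) X)"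
proof -
  have "1 = measure_pmf.prob (walk adv {#} v) X"
    using assms(2) by simp
  also have "\<dots> \<le> (\<Sum>M | size M < Suc j \<and> set_mset M \<subseteq> C. measure_pmf.prob (walk adv M v) X)"
    using finite_multisets_size_less[OF assms(1)] by (intro member_le_sum) auto
  finally show ?thesis .
qed

lemma integral_sum_prob_walk:
  fixes adv :: adversary
  shows "(\<integral>pu. (\<Sum>M\<in>S. measure_pmf.prob (walk adv M (add_update v (snd pu))) X) \<partial>adv p y)
           = (\<Sum>M\<in>S. measure_pmf.prob (walk adv (add_mset (p, y) M) v) X)"
  by (subst Bochner_Integration.integral_sum) (simp_all add: walk_add_mset measure_bind_pmf)

text \<open>With the algorithm's seed fixed, the vector reached after the moves from a multiset of
  configurations does not depend on their order, so the game can only fail through one of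
  the multisets of configurations visited.\<close>

lemma play_failure_le:
  fixes R :: "'q salg"
  assumes adv: "\<forall>p y. length p \<le> k \<longrightarrow>
                  (\<forall>pu\<in>set_pmf (adv p y). length (fst pu) \<le> k \<and> valid_update n (snd pu))"
    and grid: "\<forall>s. valid_stream n m s \<longrightarrow> est R r (run R r s) \<in> G" and "finite G"
  shows "(p, y) \<in> configs k G \<Longrightarrow> valid_stream n m s \<Longrightarrow> length s + j \<le> m \<Longrightarrow>
    pmf (play R adv f eps r j (p, y, run R r s, freq s)) False \<le>
    (\<Sum>M | size M < j \<and> set_mset M \<subseteq> configs k G.
       measure_pmf.prob (walk adv (add_mset (p, y) M) (freq s)) (error_freqs n m f eps R r))"
proof (induction j arbitrary: p y s)
  case 0
  show ?case
    by (simp add: sum_nonneg)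
next
  case (Suc j)
  define Bad where "Bad = error_freqs n m f eps R r"
  define h where "h v = (\<Sum>M | size M < Suc j \<and> set_mset M \<subseteq> configs k G.
                           measure_pmf.prob (walk adv M v) Bad)" for v
  define F where "F = (\<lambda>(p', u).
       if mult_approx eps (f (freq (s @ [u]))) (est R r (run R r (s @ [u])))
       then play R adv f eps r j
              (p', Some (est R r (run R r (s @ [u]))), run R r (s @ [u]), freq (s @ [u]))
       else return_pmf False)"
  have F_le_h: "pmf (F (p', u)) False \<le> h (freq (s @ [u]))" if "(p', u) \<in> set_pmf (adv p y)" for p' u
  proof -
    have "length p \<le> k"
      using Suc.prems(1) by (simp add: configs_def)
    then have "length p' \<le> k" "valid_update n u"
      using adv that by fastforce+
    then have valid: "valid_stream n m (s @ [u])"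
      using Suc.prems(2,3) by (simp add: valid_stream_snoc)
    show ?thesis
    proof (cases "mult_approx eps (f (freq (s @ [u]))) (est R r (run R r (s @ [u])))")
      case True
      then have "pmf (F (p', u)) False \<le> (\<Sum>M | size M < j \<and> set_mset M \<subseteq> configs k G.
          measure_pmf.prob
            (walk adv (add_mset (p', Some (est R r (run R r (s @ [u])))) M) (freq (s @ [u]))) Bad)"
        using Suc.IH[of p' "Some (est R r (run R r (s @ [u])))" "s @ [u]"]
          \<open>length p' \<le> k\<close> grid valid Suc.prems(3)
        by (simp add: F_def Bad_def configs_def)
      also have "\<dots> \<le> h (freq (s @ [u]))"
        unfolding h_def using \<open>length p' \<le> k\<close> grid valid \<open>finite G\<close>
        by (intro sum_prob_walk_add_mset_le finite_configs) (auto simp: configs_def)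
      finally show ?thesis .
    next
      case False
      then have "freq (s @ [u]) \<in> Bad"
        using valid by (auto simp: Bad_def error_freqs_def)
      then show ?thesis
        using False \<open>finite G\<close> by (simp add: F_def h_def one_le_sum_prob_walk finite_configs)
    qed
  qed
  have "pmf (play R adv f eps r (Suc j) (p, y, run R r s, freq s)) False
      = (\<integral>pu. pmf (F pu) False \<partial>adv p y)"
    unfolding play_Suc_run pmf_bind F_def ..
  also have "\<dots> \<le> (\<integral>pu. h (add_update (freq s) (snd pu)) \<partial>adv p y)"
  proof (rule integral_mono_AE)
    show "integrable (adv p y) (\<lambda>pu. pmf (F pu) False)"
      by (rule measure_pmf.integrable_const_bound[where B=1]) (auto simp: pmf_le_1)
    show "integrable (adv p y) (\<lambda>pu. h (add_update (freq s) (snd pu)))"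
      unfolding h_def by (intro Bochner_Integration.integrable_sum) simp
    show "AE pu in adv p y. pmf (F pu) False \<le> h (add_update (freq s) (snd pu))"
      using F_le_h by (auto simp: freq_snoc intro!: AE_pmfI)
  qed
  also have "\<dots> = (\<Sum>M | size M < Suc j \<and> set_mset M \<subseteq> configs k G.
                     measure_pmf.prob (walk adv (add_mset (p, y) M) (freq s)) Bad)"
    unfolding h_def by (rule integral_sum_prob_walk)
  finally show ?case
    by (simp add: Bad_def)
qed

text \<open>The walks do not depend on the algorithm's seed, so integrating over the seed first bounds
  each term of the union bound by \<open>\<beta>\<close>.\<close>

lemma game_failure_le:
  fixes R :: "'q salg"
  assumes adv: "bounded_adversary n k p0 adv"
    and grid: "\<forall>r\<in>set_pmf (seed R). \<forall>s. valid_stream n m s \<longrightarrow> est R r (run R r s) \<in> G"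
    and "finite G"
    and error: "\<And>w. measure_pmf.prob (seed R) {r. w \<in> error_freqs n m f eps R r} \<le> \<beta>"
  shows "pmf (game R adv p0 f eps m) False \<le> real m ^ card (configs k G) * \<beta>"
proof -
  define MS where "MS = {M. size M < m \<and> set_mset M \<subseteq> configs k G}"
  define walks where "walks M = walk adv (add_mset (p0, None) M) (\<lambda>_. 0)" for M
  have "(p0, None) \<in> configs k G"
    using adv by (simp add: bounded_adversary_def configs_def)
  have "valid_stream n m []"
    by (simp add: valid_stream_def)
  have "pmf (game R adv p0 f eps m) False
      = (\<integral>r. pmf (play R adv f eps r m (p0, None, run R r [], freq [])) False \<partial>seed R)"
    by (simp add: game_def pmf_bind run_def freq_Nil)
  also have "\<dots> \<le> (\<integral>r. (\<Sum>M\<in>MS. measure_pmf.prob (walks M) (error_freqs n m f eps R r)) \<partial>seed R)"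
  proof (rule integral_mono_AE)
    show "integrable (seed R) (\<lambda>r. pmf (play R adv f eps r m (p0, None, run R r [], freq [])) False)"
      by (rule measure_pmf.integrable_const_bound[where B=1]) (auto simp: pmf_le_1)
    show "integrable (seed R) (\<lambda>r. \<Sum>M\<in>MS. measure_pmf.prob (walks M) (error_freqs n m f eps R r))"
      by (intro Bochner_Integration.integrable_sum) simp
    show "AE r in seed R. pmf (play R adv f eps r m (p0, None, run R r [], freq [])) False
        \<le> (\<Sum>M\<in>MS. measure_pmf.prob (walks M) (error_freqs n m f eps R r))"
      using play_failure_le[of k adv n m R _ G p0 None "[]" m f eps] grid adv \<open>finite G\<close>
        \<open>(p0, None) \<in> configs k G\<close> \<open>valid_stream n m []\<close>
      by (intro AE_pmfI) (simp add: MS_def walks_def freq_Nil bounded_adversary_def)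
  qed
  also have "\<dots> \<le> real (card MS) * \<beta>"
    by (rule integral_sum_prob_le) (rule error)
  also have "\<dots> \<le> real m ^ card (configs k G) * \<beta>"
  proof -
    have "0 \<le> \<beta>"
      using error measure_nonneg order_trans by blast
    moreover have "card MS \<le> m ^ card (configs k G)"
      unfolding MS_def by (rule card_multisets_size_less[OF finite_configs]) fact
    ultimately show ?thesis
      by (simp add: mult_right_mono flip: of_nat_power)
  qed
  finally show ?thesis .
qed

section \<open>Choice of the parameters\<close>

lemma game_failure_median_of_copies_le:
  fixes B :: "'r salg"
  assumes B: "order_invariant n m B" "uses_space n m B Ms" "oblivious_correct n m f g (1/10) B"
    and range: "\<forall>v. (\<forall>i\<ge>n. v i = 0) \<longrightarrow> f v = 0 \<or> (1 \<le> f v \<and> f v \<le> a)"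
    and g: "0 < g" "(1 + g)\<^sup>2 \<le> 1 + \<epsilon>"
    and K: "(1 + g) * a \<le> (1 + g) ^ K"
    and adv: "bounded_adversary n k p0 adv"
  shows "pmf (game (median_of_copies B Ms T g K) adv p0 f \<epsilon> m) False
           \<le> real m ^ card (configs k (pow_grid g K)) * (3/5) ^ T"
proof (rule game_failure_le[OF adv _ finite_pow_grid])
  show "\<forall>r\<in>set_pmf (seed (median_of_copies B Ms T g K)). \<forall>s. valid_stream n m s \<longrightarrow>
          est (median_of_copies B Ms T g K) r (run (median_of_copies B Ms T g K) r s) \<in> pow_grid g K"
    using est_median_of_copies_mem[OF B(2)] by blast
  show "measure_pmf.prob (seed (median_of_copies B Ms T g K))
          {r. w \<in> error_freqs n m f \<epsilon> (median_of_copies B Ms T g K) r}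
          \<le> (3/5) ^ T" for w
    by (rule median_of_copies_error_prob_le[OF B range g K])
qed

lemma card_configs_pow_grid_le: "card (configs k (pow_grid g K)) \<le> 2 ^ Suc k * (K + 3)"
proof -
  have "card (configs k (pow_grid g K)) \<le> 2 ^ Suc k * (card (pow_grid g K) + 1)"
    by (rule card_configs_le) simp
  also have "\<dots> \<le> 2 ^ Suc k * (K + 3)"
    using card_pow_grid_le[of g K] by (intro mult_le_mono2) simp
  finally show ?thesis .
qed

lemma pow_mult_three_fifths_pow_le:
  assumes "0 < N" "0 < \<delta>" and exponents: "real N * log 2 (real m) + log 2 (1 / \<delta>) \<le> real T / 2"
  shows "real m ^ N * (3/5) ^ T \<le> \<delta>"
proof (cases "m = 0")
  case True
  then show ?thesis
    using assms(1,2) by (simp add: zero_power)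
next
  case False
  have ln_three_fifths: "ln (3/5 :: real) \<le> - ln 2 / 2"
  proof -
    have "2 * ln (3/5 :: real) = ln ((3/5)\<^sup>2)"
      by (simp add: ln_realpow)
    also have "\<dots> \<le> ln (1/2)"
      by (simp add: power2_eq_square)
    finally show ?thesis
      by (simp add: ln_div)
  qed
  have "ln (real m ^ N * (3/5) ^ T) \<le> real N * ln (real m) - real T * (ln 2 / 2)"
    using False mult_left_mono[OF ln_three_fifths, of "real T"] by (simp add: ln_mult ln_realpow)
  also have "\<dots> \<le> ln \<delta>"
    using mult_right_mono[OF exponents, of "ln 2"] \<open>0 < \<delta>\<close>
    by (simp add: log_def ln_div algebra_simps)
  finally show ?thesis
    using False \<open>0 < \<delta>\<close> by (simp add: ln_le_cancel_iff)
qed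

lemma game_failure_median_of_copies_le_delta:
  fixes B :: "'r salg"
  assumes B: "order_invariant n m B" "uses_space n m B Ms" "oblivious_correct n m f (\<epsilon> / 3) (1/10) B"
    and range: "\<forall>v. (\<forall>i\<ge>n. v i = 0) \<longrightarrow> f v = 0 \<or> (1 \<le> f v \<and> f v \<le> real \<alpha>)"
    and "2 \<le> \<alpha>" "0 < \<epsilon>" "\<epsilon> < 1" "0 < \<delta>" "\<delta> < 1/10"
    and K: "(1 + \<epsilon> / 3) * real \<alpha> \<le> (1 + \<epsilon> / 3) ^ K" "real K + 3 \<le> 24 * (log 2 (real \<alpha>) / \<epsilon>)"
    and T: "96 * (2 ^ k * (log 2 (real \<alpha>) / \<epsilon>) * log 2 (real m) + log 2 (1/\<delta>)) \<le> T"
    and adv: "bounded_adversary n k p0 adv"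
  shows "pmf (game (median_of_copies B Ms T (\<epsilon> / 3) K) adv p0 f \<epsilon> m) False \<le> \<delta>"
proof -
  define N where "N = card (configs k (pow_grid (\<epsilon> / 3) K))"
  have "([], None) \<in> configs k (pow_grid (\<epsilon> / 3) K)"
    by (simp add: configs_def)
  then have "0 < N"
    using finite_configs[of "pow_grid (\<epsilon> / 3) K" k] by (auto simp: N_def card_gt_0_iff)
  have "real N \<le> 2 ^ Suc k * (real K + 3)"
    using of_nat_mono[OF card_configs_pow_grid_le[of k "\<epsilon> / 3" K]] by (simp add: N_def)
  also have "\<dots> \<le> 2 ^ Suc k * (24 * (log 2 (real \<alpha>) / \<epsilon>))"
    using K(2) by (intro mult_left_mono) auto
  finally have "real N * log 2 (real m) \<le> 2 ^ Suc k * (24 * (log 2 (real \<alpha>) / \<epsilon>)) * log 2 (real m)"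
    by (rule mult_right_mono) (cases "m = 0"; simp add: log_def)
  then have "real N * log 2 (real m) \<le> 48 * (2 ^ k * (log 2 (real \<alpha>) / \<epsilon>) * log 2 (real m))"
    by (simp add: algebra_simps)
  moreover have "1 \<le> log 2 (1/\<delta>)"
    using \<open>0 < \<delta>\<close> \<open>\<delta> < 1/10\<close> by (simp add: le_log_iff field_simps)
  ultimately have exponents: "real N * log 2 (real m) + log 2 (1/\<delta>) \<le> real T / 2"
    using T unfolding distrib_left by linarith
  have "(1 + \<epsilon> / 3)\<^sup>2 \<le> 1 + \<epsilon>"
    using \<open>0 < \<epsilon>\<close> \<open>\<epsilon> < 1\<close> by (simp add: power2_eq_square field_simps)
  then have "pmf (game (median_of_copies B Ms T (\<epsilon> / 3) K) adv p0 f \<epsilon> m) False \<le> real m ^ N * (3/5) ^ T"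
    unfolding N_def using \<open>0 < \<epsilon>\<close> by (intro game_failure_median_of_copies_le[OF B range _ _ K(1) adv]) simp_all
  also have "\<dots> \<le> \<delta>"
    by (rule pow_mult_three_fifths_pow_le[OF \<open>0 < N\<close> \<open>0 < \<delta>\<close> exponents])
  finally show ?thesis .
qed

lemma uses_space_mono: "uses_space n m A S \<Longrightarrow> S \<le> S' \<Longrightarrow> uses_space n m A S'"
  unfolding uses_space_def by force

lemma robust_algorithm_exists:
  fixes B :: "'r salg"
  assumes B: "order_invariant n m B" "uses_space n m B Ms" "oblivious_correct n m f (\<epsilon> / 3) (1/10) B"
    and range: "\<forall>v. (\<forall>i\<ge>n. v i = 0) \<longrightarrow> f v = 0 \<or> (1 \<le> f v \<and> f v \<le> real \<alpha>)"
    and "2 \<le> \<alpha>" "0 < \<epsilon>" "\<epsilon> < 1" "0 < \<delta>" "\<delta> < 1/10"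
  shows "\<exists>R :: ('r list \<times> nat) salg.
           uses_space n m R
             (real Ms * 194 * (2 ^ k * (log 2 (real \<alpha>) / \<epsilon>) * log 2 (real m) + log 2 (1/\<delta>))) \<and>
           (\<forall>p0 adv. bounded_adversary n k p0 adv \<longrightarrow> pmf (game R adv p0 f \<epsilon> m) True \<ge> 1 - \<delta>)"
proof -
  define X where "X = 2 ^ k * (log 2 (real \<alpha>) / \<epsilon>) * log 2 (real m) + log 2 (1/\<delta>)"
  define T where "T = nat \<lceil>96 * X\<rceil>"
  obtain K where K: "(1 + \<epsilon> / 3) * real \<alpha> \<le> (1 + \<epsilon> / 3) ^ K" "real K + 3 \<le> 24 * (log 2 (real \<alpha>) / \<epsilon>)"
    using round_up_exponent_exists[of "\<epsilon> / 3" "real \<alpha>"] \<open>2 \<le> \<alpha>\<close> \<open>0 < \<epsilon>\<close> \<open>\<epsilon> < 1\<close> by auto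
  have "0 \<le> log 2 (real m)"
    by (cases "m = 0") (auto simp: log_def)
  then have "0 \<le> 2 ^ k * (log 2 (real \<alpha>) / \<epsilon>) * log 2 (real m)"
    using \<open>0 < \<epsilon>\<close> \<open>2 \<le> \<alpha>\<close> by simp
  moreover have "1 \<le> log 2 (1/\<delta>)"
    using \<open>0 < \<delta>\<close> \<open>\<delta> < 1/10\<close> by (simp add: le_log_iff field_simps)
  ultimately have "1 \<le> X"
    unfolding X_def by linarith
  then have "real T = \<lceil>96 * X\<rceil>"
    by (simp add: T_def)
  then have T: "96 * X \<le> T" "T \<le> 97 * X"
    using \<open>1 \<le> X\<close> of_int_ceiling_le_add_one[of "96 * X"] le_of_int_ceiling[of "96 * X"] by linarith+
  have "real (T * pad_width Ms) \<le> (97 * X) * (2 * real Ms)"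
    using T(2) \<open>1 \<le> X\<close> by (simp only: of_nat_mult, intro mult_mono) (auto simp: pad_width_def)
  then have "uses_space n m (median_of_copies B Ms T (\<epsilon> / 3) K) (real Ms * 194 * X)"
    by (intro uses_space_mono[OF median_of_copies_uses_space[OF B(2)]]) (simp add: algebra_simps)
  moreover have "pmf (game (median_of_copies B Ms T (\<epsilon> / 3) K) adv p0 f \<epsilon> m) False \<le> \<delta>"
    if "bounded_adversary n k p0 adv" for p0 adv
    using game_failure_median_of_copies_le_delta[OF B range \<open>2 \<le> \<alpha>\<close> _ _ _ _ K _ that] T(1) assms(6-9)
    by (simp add: X_def)
  ultimately show ?thesis
    unfolding X_def
    by (intro exI[of _ "median_of_copies B Ms T (\<epsilon> / 3) K"]) (auto simp: pmf_True_conv_False)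
qed

theorem theorem6p4:
  shows "\<exists>C>(0::real). \<forall>(n::nat) (m::nat) (\<alpha>::nat) (f::(nat \<Rightarrow> int) \<Rightarrow> real)
            (A::real \<Rightarrow> real \<Rightarrow> 'r salg) (M::real \<Rightarrow> real \<Rightarrow> nat).
     \<alpha> \<ge> 2 \<longrightarrow>
     (\<forall>v. (\<forall>i\<ge>n. v i = 0) \<longrightarrow> f v = 0 \<or> (1 \<le> f v \<and> f v \<le> real \<alpha>)) \<longrightarrow>
     (\<forall>\<epsilon> \<delta>. 0 < \<epsilon> \<and> \<epsilon> < 1 \<and> 0 < \<delta> \<and> \<delta> < 1 \<longrightarrow>
        order_invariant n m (A \<epsilon> \<delta>) \<and> uses_space n m (A \<epsilon> \<delta>) (real (M \<epsilon> \<delta>)) \<and>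
        oblivious_correct n m f \<epsilon> \<delta> (A \<epsilon> \<delta>)) \<longrightarrow>
     (\<forall>\<epsilon> \<delta> (k::nat). 0 < \<epsilon> \<and> \<epsilon> < 1 \<and> 0 < \<delta> \<and> \<delta> < 1/10 \<longrightarrow>
        (\<exists>R :: ('r list \<times> nat) salg.
           uses_space n m R
             (real (M (\<epsilon>/3) (1/10)) * C *
               (2 ^ k * (log 2 (real \<alpha>) / \<epsilon>) * log 2 (real m) + log 2 (1/\<delta>))) \<and>
           (\<forall>p0 adv. bounded_adversary n k p0 adv \<longrightarrow>
              pmf (game R adv p0 f \<epsilon> m) True \<ge> 1 - \<delta>)))"
proof (intro exI[of _ 194] conjI allI impI)
  fix n m \<alpha> :: nat and f :: "(nat \<Rightarrow> int) \<Rightarrow> real"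
    and A :: "real \<Rightarrow> real \<Rightarrow> 'r salg" and M :: "real \<Rightarrow> real \<Rightarrow> nat" and \<epsilon> \<delta> :: real and k :: nat
  assume "2 \<le> \<alpha>" and range: "\<forall>v. (\<forall>i\<ge>n. v i = 0) \<longrightarrow> f v = 0 \<or> (1 \<le> f v \<and> f v \<le> real \<alpha>)"
    and A: "\<forall>\<epsilon> \<delta>. 0 < \<epsilon> \<and> \<epsilon> < 1 \<and> 0 < \<delta> \<and> \<delta> < 1 \<longrightarrow>
        order_invariant n m (A \<epsilon> \<delta>) \<and> uses_space n m (A \<epsilon> \<delta>) (real (M \<epsilon> \<delta>)) \<and>
        oblivious_correct n m f \<epsilon> \<delta> (A \<epsilon> \<delta>)"
    and "0 < \<epsilon> \<and> \<epsilon> < 1 \<and> 0 < \<delta> \<and> \<delta> < 1/10"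
  then show "\<exists>R :: ('r list \<times> nat) salg.
           uses_space n m R
             (real (M (\<epsilon>/3) (1/10)) * 194 *
               (2 ^ k * (log 2 (real \<alpha>) / \<epsilon>) * log 2 (real m) + log 2 (1/\<delta>))) \<and>
           (\<forall>p0 adv. bounded_adversary n k p0 adv \<longrightarrow>
              pmf (game R adv p0 f \<epsilon> m) True \<ge> 1 - \<delta>)"
    using spec[OF spec[OF A, of "\<epsilon>/3"], of "1/10"] \<open>2 \<le> \<alpha>\<close>
    by (intro robust_algorithm_exists[where B="A (\<epsilon>/3) (1/10)", OF _ _ _ range]) auto
qed simp

end
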